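(* Let $X$ be an $n$-dimensional non-singular tropical hypersurface in a (non-singular) tropical toric variety $Y$. For a face $\sigma$ of $X$ of dimension $q$ and sedentarity $\operatorname{sed}(\sigma)$, we have $\mathcal{N}_p(\sigma)=0$ whenever $p\le n-q-\operatorname{sed}(\sigma)$.
   Context: A non-singular tropical toric variety $Y$ of dimension $n+1$ is the tropical toric variety associated to a simplicial unimodular rational polyhedral fan $\Sigma$ in $\mathbb{R}^{n+1}$; it is the disjoint union of strata $Y_\rho\cong\mathbb{R}^{n+1-\dim\rho}$, $\rho\in\Sigma$. The sedentarity of a point is the codimension in $Y$ of the stratum containing it, and $\operatorname{sed}(\sigma)$ is that of the relative interior points of $\sigma$. For $\rho$ with primitive ray generators $r_1,\dots,r_s$, $T_{\mathbb Z}(Y_\rho)=\mathbb{Z}^{n+1}/\langle r_1,\dots,r_s\rangle$, with quotient maps $\pi_{\rho\eta}$ for $\rho\subset\eta$; $T_{\mathbb Z}(\sigma)$ is the integer tangent lattice of a rational polyhedron $\sigma$ inside $T_{\mathbb Z}(Y_\rho)$ where $\operatorname{relint}\sigma\subset Y_\rho$. A tropical hypersurface $X$ in $Y$ is the closure of a tropical hypersurface in $Y_0=\mathbb{R}^{n+1}$ defined by a tropical polynomial, with the polyhedral structure dual to the induced regular subdivision of its Newton polytope; $X$ is non-singular if each $X\cap Y_\rho$ is a tropical hypersurface in $Y_\rho$ dual to a primitive regular triangulation of its Newton polytope. For a face $\tau$ of $X$ with relative interior in $Y_\rho$: $\mathcal{F}^X_p(\tau)=\sum_\sigma\bigwedge^pT_{\mathbb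 Z}(\sigma)$ over faces $\sigma\supseteq\tau$ of $X$ with relative interior in $Y_\rho$, and $\mathcal{F}^Y_p|_X(\tau)=\bigwedge^pT_{\mathbb Z}(Y_\rho)$. $\mathcal{N}_p$ is the cokernel cosheaf on $X$ of the natural inclusion $\mathcal{F}^X_p\to\mathcal{F}^Y_p|_X$, i.e. $\mathcal{N}_p(\tau)=\bigwedge^pT_{\mathbb Z}(Y_\rho)/\mathcal{F}^X_p(\tau)$. *)

theory Defs
  imports "HOL-Analysis.Analysis"
begin

text \<open>The lattice N = Z^(n+1) inside R^(n+1) = real^'d, with CARD('d) = n+1.
  The dual lattice M is identified with the same integer points via the inner product.\<close>

definition lat :: "(real^'d) set" where
  "lat = {x. \<forall>i. x $ i \<in> \<int>}"

definition int_span :: "(real^'d) set \<Rightarrow> (real^'d) set" where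
  "int_span S = {\<Sum>x\<in>F. of_int (k x) *\<^sub>R x | F k. finite F \<and> F \<subseteq> S}"

definition extends_to_basis :: "(real^'d) set \<Rightarrow> (real^'d) set \<Rightarrow> bool" where
  "extends_to_basis L S = (\<exists>B. S \<subseteq> B \<and> B \<subseteq> L \<and> independent B \<and> int_span B = L)"

section \<open>Exterior powers (written out in Pluecker coordinates)\<close>

text \<open>v_0 \<and> ... \<and> v_(p-1) in \<and>^p Z^(n+1), represented by its coordinate function
  on index tuples (i_0,...,i_(p-1)): the p x p minor det [v_j $ i_k].\<close>
definition wedge :: "nat \<Rightarrow> (nat \<Rightarrow> real^'d) \<Rightarrow> ('d list \<Rightarrow> real)" where
  "wedge p vs = (\<lambda>is. if length is = p then
      (\<Sum>\<pi> | \<pi> permutes {..<p}. of_int (sign \<pi>) * (\<Prod>j<p. vs j $ (is ! \<pi> j))) else 0)"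

definition zspan_fun :: "('b \<Rightarrow> real) set \<Rightarrow> ('b \<Rightarrow> real) set" where
  "zspan_fun S = {(\<lambda>i. \<Sum>x\<in>F. of_int (k x) * x i) | F k. finite F \<and> F \<subseteq> S}"

text \<open>\<and>^p L for a saturated sublattice L of Z^(n+1), as a subgroup of \<and>^p Z^(n+1).\<close>
definition ext_power :: "nat \<Rightarrow> (real^'d) set \<Rightarrow> ('d list \<Rightarrow> real) set" where
  "ext_power p L = zspan_fun {wedge p vs | vs. \<forall>j<p. vs j \<in> L}"

text \<open>The kernel <R> \<and> \<and>^(p-1) Z^(n+1) of \<and>^p Z^(n+1) \<rightarrow> \<and>^p (Z^(n+1)/<R>).\<close>
definition wedge_kernel :: "nat \<Rightarrow> (real^'d) set \<Rightarrow> ('d list \<Rightarrow> real) set" where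
  "wedge_kernel p R = zspan_fun {wedge p vs | vs. (\<forall>j<p. vs j \<in> lat) \<and> (\<exists>j<p. vs j \<in> int_span R)}"

text \<open>A simplicial unimodular cone is encoded by its (finite) set of primitive ray generators.\<close>
definition cone_of :: "(real^'d) set \<Rightarrow> (real^'d) set" where
  "cone_of R = {\<Sum>r\<in>R. a r *\<^sub>R r | a. \<forall>r\<in>R. a r \<ge> 0}"

definition nonsingular_fan :: "(real^'d) set set \<Rightarrow> bool" where
  "nonsingular_fan \<Sigma> \<longleftrightarrow> finite \<Sigma> \<and> \<Sigma> \<noteq> {} \<and>
     (\<forall>R\<in>\<Sigma>. finite R \<and> extends_to_basis lat R) \<and>
     (\<forall>R\<in>\<Sigma>. \<forall>S. S \<subseteq> R \<longrightarrow> S \<in> \<Sigma>) \<and>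
     (\<forall>R1\<in>\<Sigma>. \<forall>R2\<in>\<Sigma>. cone_of R1 \<inter> cone_of R2 = cone_of (R1 \<inter> R2))"

definition tval :: "(real^'d) set \<Rightarrow> (real^'d \<Rightarrow> real) \<Rightarrow> real^'d \<Rightarrow> real" where
  "tval A c x = Max ((\<lambda>m. c m + m \<bullet> x) ` A)"

definition targ :: "(real^'d) set \<Rightarrow> (real^'d \<Rightarrow> real) \<Rightarrow> real^'d \<Rightarrow> (real^'d) set" where
  "targ A c x = {m \<in> A. c m + m \<bullet> x = tval A c x}"

definition tvar :: "(real^'d) set \<Rightarrow> (real^'d \<Rightarrow> real) \<Rightarrow> (real^'d) set" where
  "tvar A c = {x. 2 \<le> card (targ A c x)}"

definition subdiv_cells :: "(real^'d) set \<Rightarrow> (real^'d \<Rightarrow> real) \<Rightarrow> (real^'d) set set" where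
  "subdiv_cells A c = {convex hull (targ A c x) | x. True}"

definition dual_faces :: "(real^'d) set \<Rightarrow> (real^'d \<Rightarrow> real) \<Rightarrow> (real^'d) set set" where
  "dual_faces A c = {{x. \<epsilon> \<subseteq> convex hull (targ A c x)} | \<epsilon>. \<epsilon> \<in> subdiv_cells A c \<and> aff_dim \<epsilon> \<ge> 1}"

definition primitive_triangulation :: "(real^'d) set \<Rightarrow> (real^'d) set \<Rightarrow> (real^'d \<Rightarrow> real) \<Rightarrow> bool" where
  "primitive_triangulation L A c \<longleftrightarrow>
     (\<forall>x. \<exists>m0\<in>targ A c x. extends_to_basis L ((\<lambda>m. m - m0) ` (targ A c x - {m0})))"

text \<open>A subset of the stratum Y_rho = R^(n+1)/span rho is represented by its (span rho-invariant)
  preimage in R^(n+1).  The dual lattice of T_Z(Y_rho) is the lattice below.\<close>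
definition stratum_dual_lat :: "(real^'d) set \<Rightarrow> (real^'d) set" where
  "stratum_dual_lat R = {m \<in> lat. \<forall>r\<in>R. m \<bullet> r = 0}"

text \<open>Preimage of (closure of S in Y) \<inter> Y_rho, for S \<subseteq> Y_0 = R^(n+1): a sequence x_k in Y_0
  converges to [y] in Y_rho iff x_k = y_k + \<Sum> t_(k,r) r with y_k \<rightarrow> y and every t_(k,r) \<rightarrow> +\<infinity>.\<close>
definition clos_in :: "(real^'d) set \<Rightarrow> (real^'d) set \<Rightarrow> (real^'d) set" where
  "clos_in R S = {y. \<exists>xs ys ts. (\<forall>k. xs k \<in> S) \<and> ys \<longlonglongrightarrow> y \<and>
      (\<forall>r\<in>R. filterlim (\<lambda>k. ts k r) at_top sequentially) \<and>
      (\<forall>k. xs k = ys k + (\<Sum>r\<in>R. ts k r *\<^sub>R r))}"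

text \<open>Faces of X = closure of the hypersurface of (A,c) whose relative interior lies in Y_rho.\<close>
definition faces_in :: "(real^'d) set \<Rightarrow> (real^'d \<Rightarrow> real) \<Rightarrow> (real^'d) set \<Rightarrow> (real^'d) set set" where
  "faces_in A c R = {clos_in R \<sigma> | \<sigma>. \<sigma> \<in> dual_faces A c \<and> clos_in R \<sigma> \<noteq> {}}"

text \<open>X (closure of V(f) in Y) is non-singular: each X \<inter> Y_rho, with its polyhedral structure,
  is a tropical hypersurface in Y_rho dual to a primitive regular triangulation.\<close>
definition nonsingular_hypersurface :: "(real^'d) set set \<Rightarrow> (real^'d) set \<Rightarrow> (real^'d \<Rightarrow> real) \<Rightarrow> bool" where
  "nonsingular_hypersurface \<Sigma> A c \<longleftrightarrow>
     (\<forall>R\<in>\<Sigma>. \<exists>A' c'. finite A' \<and> A' \<noteq> {} \<and> A' \<subseteq> stratum_dual_lat R \<and>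
        tvar A' c' = clos_in R (tvar A c) \<and>
        dual_faces A' c' = faces_in A c R \<and>
        primitive_triangulation (stratum_dual_lat R) A' c')"

text \<open>Preimage in Z^(n+1) of T_Z(sigma) \<subseteq> T_Z(Y_rho).\<close>
definition tangent_lat :: "(real^'d) set \<Rightarrow> (real^'d) set" where
  "tangent_lat \<sigma> = lat \<inter> span {x - y | x y. x \<in> \<sigma> \<and> y \<in> \<sigma>}"

text \<open>N_p(tau) = \<and>^p T_Z(Y_rho) / F^X_p(tau) = \<and>^p Z^(n+1) / (ker + sum of \<and>^p T_Z(sigma)).
  N_sub is the subgroup of \<and>^p Z^(n+1) being divided out.\<close>
definition N_sub :: "(real^'d) set \<Rightarrow> (real^'d \<Rightarrow> real) \<Rightarrow> nat \<Rightarrow> (real^'d) set \<Rightarrow> (real^'d) set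
    \<Rightarrow> ('d list \<Rightarrow> real) set" where
  "N_sub A c p R \<tau> = zspan_fun (wedge_kernel p R \<union>
      (\<Union>\<sigma>\<in>{\<sigma> \<in> faces_in A c R. \<tau> \<subseteq> \<sigma>}. ext_power p (tangent_lat \<sigma>)))"

definition N_cosheaf :: "(real^'d) set \<Rightarrow> (real^'d \<Rightarrow> real) \<Rightarrow> nat \<Rightarrow> (real^'d) set \<Rightarrow> (real^'d) set
    \<Rightarrow> ('d list \<Rightarrow> real) set set" where
  "N_cosheaf A c p R \<tau> =
     (\<lambda>w. {(\<lambda>i. w i + g i) | g. g \<in> N_sub A c p R \<tau>}) ` ext_power p lat"

text \<open>Dimension of a face tau in Y_rho (tau given by its preimage).\<close>
definition face_dim :: "(real^'d) set \<Rightarrow> (real^'d) set \<Rightarrow> int" where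
  "face_dim R \<tau> = aff_dim \<tau> - int (card R)"

end

theory Submission
  imports Defs
begin

(* Write tau as the face dual to a cell of the primitive triangulation attached to X in the
   stratum Y_rho: a unimodular simplex with a vertex m0 whose edge vectors V extend to a
   Z-basis of the dual lattice M of Y_rho.  All directions orthogonal to V are tangent to tau,
   so dim tau + sed tau >= n + 1 - |V|, and the hypothesis gives p < |V|.  Every edge v of the
   simplex is a cell as well; its dual face sigma_v contains tau, and T_Z(sigma_v) contains the
   lattice vectors orthogonal to v.  As V is part of a basis of M and rho is part of a basis of
   Z^(n+1), there are integral vectors y_v with <y_v, v'> = delta(v, v').  Splitting each
   u in Z^(n+1) as (u - sum_v <u,v> y_v) + sum_v <u,v> y_v and expanding a p-fold wedge
   multilinearly, every term misses some y_v since p < |V|, so it lies in the p-th exterior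
   power of the orthogonal complement of v, hence in that of T_Z(sigma_v).  Thus the whole
   p-th exterior power of Z^(n+1) lies in the subgroup divided out, and N_p(tau) = 0. *)

lemma zspan_fun_zero: "(\<lambda>i. 0) \<in> zspan_fun S"
  unfolding zspan_fun_def by (intro CollectI exI[of _ "{}"]) auto

lemma zspan_fun_base: "x \<in> S \<Longrightarrow> x \<in> zspan_fun S"
  unfolding zspan_fun_def by (intro CollectI exI[of _ "{x}"] exI[of _ "\<lambda>_. 1"]) auto

lemma zspan_fun_add:
  assumes "a \<in> zspan_fun S" "b \<in> zspan_fun S"
  shows "(\<lambda>i. a i + b i) \<in> zspan_fun S"
proof -
  obtain F k where F: "a = (\<lambda>i. \<Sum>x\<in>F. of_int (k x) * x i)" "finite F" "F \<subseteq> S"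
    using assms(1) unfolding zspan_fun_def by blast
  obtain G l where G: "b = (\<lambda>i. \<Sum>x\<in>G. of_int (l x) * x i)" "finite G" "G \<subseteq> S"
    using assms(2) unfolding zspan_fun_def by blast
  define kl where "kl x = (if x \<in> F then k x else 0) + (if x \<in> G then l x else 0)" for x
  have "a i + b i = (\<Sum>x\<in>F \<union> G. of_int (kl x) * x i)" for i
  proof -
    have "(\<Sum>x\<in>F \<union> G. of_int (kl x) * x i) =
        (\<Sum>x\<in>F \<union> G. if x \<in> F then of_int (k x) * x i else 0) +
        (\<Sum>x\<in>F \<union> G. if x \<in> G then of_int (l x) * x i else 0)"
      unfolding kl_def sum.distrib[symmetric] by (intro sum.cong) (auto simp: distrib_right)
    then show ?thesis
      using F G by (simp add: sum.inter_restrict[symmetric] Int_absorb1 Int_absorb2)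
  qed
  then show ?thesis unfolding zspan_fun_def using F G by blast
qed

lemma zspan_fun_scale:
  assumes "a \<in> zspan_fun S" "r \<in> \<int>"
  shows "(\<lambda>i. r * a i) \<in> zspan_fun S"
proof -
  obtain F k where F: "a = (\<lambda>i. \<Sum>x\<in>F. of_int (k x) * x i)" "finite F" "F \<subseteq> S"
    using assms(1) unfolding zspan_fun_def by blast
  obtain n where n: "r = of_int n" using assms(2) by (rule Ints_cases)
  have "(\<lambda>i. r * a i) = (\<lambda>i. \<Sum>x\<in>F. of_int (n * k x) * x i)"
    using F n by (simp add: sum_distrib_left mult.assoc)
  then show ?thesis
    unfolding zspan_fun_def using F(2,3) by (intro CollectI exI[of _ F] exI[of _ "\<lambda>x. n * k x"]) simp
qed

lemma zspan_fun_sum: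
  assumes "finite I" "\<And>f. f \<in> I \<Longrightarrow> g f \<in> zspan_fun S" "\<And>f. f \<in> I \<Longrightarrow> r f \<in> \<int>"
  shows "(\<lambda>i. \<Sum>f\<in>I. r f * g f i) \<in> zspan_fun S"
  using assms
proof (induction I rule: finite_induct)
  case empty
  then show ?case by (simp add: zspan_fun_zero)
next
  case (insert f I)
  then show ?case by (simp add: zspan_fun_add zspan_fun_scale)
qed

lemma zspan_fun_minimal:
  assumes "S \<subseteq> zspan_fun S'"
  shows "zspan_fun S \<subseteq> zspan_fun S'"
proof
  fix a assume "a \<in> zspan_fun S"
  then obtain F k where F: "a = (\<lambda>i. \<Sum>x\<in>F. of_int (k x) * x i)" "finite F" "F \<subseteq> S"
    unfolding zspan_fun_def by blast
  show "a \<in> zspan_fun S'" unfolding F(1) using F assms by (intro zspan_fun_sum) auto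
qed

lemma zspan_fun_mono: "S \<subseteq> S' \<Longrightarrow> zspan_fun S \<subseteq> zspan_fun S'"
  by (meson order_trans subsetI zspan_fun_base zspan_fun_minimal)

lemma zspan_fun_diff:
  assumes "a \<in> zspan_fun S" "b \<in> zspan_fun S"
  shows "(\<lambda>i. a i - b i) \<in> zspan_fun S"
  using zspan_fun_add[OF assms(1) zspan_fun_scale[OF assms(2), of "-1"]] by simp

lemma translates_of_zspan_fun:
  assumes "W \<subseteq> zspan_fun S" "W \<noteq> {}"
  shows "(\<lambda>w. {(\<lambda>i. w i + g i) | g. g \<in> zspan_fun S}) ` W = {zspan_fun S}"
proof -
  have "{(\<lambda>i. w i + g i) | g. g \<in> zspan_fun S} = zspan_fun S" if "w \<in> W" for w
  proof (intro set_eqI iffI)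
    fix h assume "h \<in> {(\<lambda>i. w i + g i) | g. g \<in> zspan_fun S}"
    then show "h \<in> zspan_fun S" using zspan_fun_add assms(1) that by blast
  next
    fix h assume "h \<in> zspan_fun S"
    then have "(\<lambda>i. h i - w i) \<in> zspan_fun S" using zspan_fun_diff assms(1) that by blast
    then show "h \<in> {(\<lambda>i. w i + g i) | g. g \<in> zspan_fun S}" by force
  qed
  then show ?thesis using assms(2) by blast
qed

lemma ext_power_mono: "L \<subseteq> L' \<Longrightarrow> ext_power p L \<subseteq> ext_power p L'"
  unfolding ext_power_def by (intro zspan_fun_mono) blast

lemma zero_in_ext_power: "(\<lambda>i. 0) \<in> ext_power p L"
  unfolding ext_power_def by (rule zspan_fun_zero)

lemma wedge_in_ext_power: "(\<And>j. j < p \<Longrightarrow> vs j \<in> L) \<Longrightarrow> wedge p vs \<in> ext_power p L"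
  unfolding ext_power_def by (rule zspan_fun_base) blast

lemma wedge_multilinear:
  fixes w :: "nat \<Rightarrow> 'l \<Rightarrow> real^'d"
  assumes "finite I" and "\<And>j. j < p \<Longrightarrow> vs j = (\<Sum>l\<in>I. a j l *\<^sub>R w j l)"
  shows "wedge p vs =
    (\<lambda>is. \<Sum>f\<in>PiE {..<p} (\<lambda>_. I). (\<Prod>j<p. a j (f j)) * wedge p (\<lambda>j. w j (f j)) is)"
proof
  fix "is" :: "'d list"
  let ?P = "{\<pi>. \<pi> permutes {..<p}}" and ?F = "PiE {..<p} (\<lambda>_. I)"
  show "wedge p vs is = (\<Sum>f\<in>?F. (\<Prod>j<p. a j (f j)) * wedge p (\<lambda>j. w j (f j)) is)"
  proof (cases "length is = p")
    case True
    have "wedge p vs is = (\<Sum>\<pi>\<in>?P. of_int (sign \<pi>) * (\<Prod>j<p. \<Sum>l\<in>I. a j l * w j l $ (is ! \<pi> j)))"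
      using True assms(2) by (simp add: wedge_def)
    also have "\<dots> = (\<Sum>\<pi>\<in>?P. \<Sum>f\<in>?F. (\<Prod>j<p. a j (f j)) *
        (of_int (sign \<pi>) * (\<Prod>j<p. w j (f j) $ (is ! \<pi> j))))"
      using assms(1) by (simp add: prod_sum_PiE sum_distrib_left prod.distrib mult.left_commute)
    also have "\<dots> = (\<Sum>f\<in>?F. (\<Prod>j<p. a j (f j)) * wedge p (\<lambda>j. w j (f j)) is)"
      using True by (subst sum.swap) (simp add: wedge_def sum_distrib_left)
    finally show ?thesis .
  qed (simp add: wedge_def)
qed

lemma lat_diff: "x \<in> lat \<Longrightarrow> y \<in> lat \<Longrightarrow> x - y \<in> lat"
  by (auto simp: lat_def)

lemma lat_scaleR: "x \<in> lat \<Longrightarrow> a \<in> \<int> \<Longrightarrow> a *\<^sub>R x \<in> lat"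
  by (auto simp: lat_def)

lemma lat_sum: "(\<And>j. j \<in> F \<Longrightarrow> f j \<in> lat) \<Longrightarrow> sum f F \<in> lat"
  by (induction F rule: infinite_finite_induct) (auto simp: lat_def)

lemma lat_inner: "x \<in> lat \<Longrightarrow> y \<in> lat \<Longrightarrow> x \<bullet> y \<in> \<int>"
  by (auto simp: lat_def inner_vec_def intro!: Ints_sum Ints_mult)

lemma axis_in_lat: "axis i 1 \<in> lat"
  by (auto simp: lat_def axis_def)

lemma tval_ge: "finite A \<Longrightarrow> m \<in> A \<Longrightarrow> c m + m \<bullet> x \<le> tval A c x"
  unfolding tval_def by (intro Max_ge) auto

lemma tval_eqI:
  assumes "finite A" "m1 \<in> A" "c m1 + m1 \<bullet> x = K" "\<And>m. m \<in> A \<Longrightarrow> c m + m \<bullet> x \<le> K"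
  shows "tval A c x = K"
  unfolding tval_def using assms by (intro Max_eqI) auto

lemma eventually_nonmaximal_below:
  assumes "finite A"
  shows "\<forall>\<^sub>F s in at_right 0. \<forall>m\<in>A - targ A c x. c m + m \<bullet> (x + s *\<^sub>R v) < tval A c x + s * \<mu>"
proof (intro eventually_ball_finite ballI)
  fix m assume "m \<in> A - targ A c x"
  then have "0 < tval A c x + 0 * \<mu> - (c m + m \<bullet> (x + 0 *\<^sub>R v))"
    using tval_ge[OF assms, of m c x] unfolding targ_def by force
  moreover have "((\<lambda>s. tval A c x + s * \<mu> - (c m + m \<bullet> (x + s *\<^sub>R v)))
      \<longlongrightarrow> tval A c x + 0 * \<mu> - (c m + m \<bullet> (x + 0 *\<^sub>R v))) (at_right 0)"
    by (intro tendsto_intros)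
  ultimately have "\<forall>\<^sub>F s in at_right 0. 0 < tval A c x + s * \<mu> - (c m + m \<bullet> (x + s *\<^sub>R v))"
    by (simp only: order_tendstoD(1))
  then show "\<forall>\<^sub>F s in at_right 0. c m + m \<bullet> (x + s *\<^sub>R v) < tval A c x + s * \<mu>"
    by eventually_elim simp
qed (use assms in auto)

lemma targ_shift:
  assumes "finite A" "m1 \<in> targ A c x" "\<And>m. m \<in> targ A c x \<Longrightarrow> m \<bullet> v \<le> m1 \<bullet> v"
  shows "\<exists>s>0. targ A c (x + s *\<^sub>R v) = {m \<in> targ A c x. m \<bullet> v = m1 \<bullet> v}"
proof -
  define T M \<mu> where "T = targ A c x" and "M = tval A c x" and "\<mu> = m1 \<bullet> v"
  have "\<forall>\<^sub>F s in at_right (0::real). s > 0"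
    by (simp add: eventually_at_right_less)
  with eventually_nonmaximal_below[OF assms(1), where c=c and x=x and v=v and \<mu>=\<mu>]
  have "\<forall>\<^sub>F s in at_right 0. s > 0 \<and> (\<forall>m\<in>A - T. c m + m \<bullet> (x + s *\<^sub>R v) < M + s * \<mu>)"
    unfolding T_def M_def by eventually_elim blast
  then obtain s :: real
    where s: "s > 0" "\<And>m. m \<in> A - T \<Longrightarrow> c m + m \<bullet> (x + s *\<^sub>R v) < M + s * \<mu>"
    using eventually_happens'[OF trivial_limit_at_right_real] by blast
  have onT: "m \<in> T \<Longrightarrow> c m + m \<bullet> (x + s *\<^sub>R v) = M + s * (m \<bullet> v)" for m
    unfolding T_def M_def targ_def by (simp add: inner_add_right)
  have le: "m \<in> T \<Longrightarrow> m \<bullet> v \<le> \<mu>" for m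
    using assms(3) unfolding T_def \<mu>_def .
  have tv: "tval A c (x + s *\<^sub>R v) = M + s * \<mu>"
  proof (rule tval_eqI[OF assms(1)])
    show "m1 \<in> A" "c m1 + m1 \<bullet> (x + s *\<^sub>R v) = M + s * \<mu>"
      using assms(2) onT unfolding T_def \<mu>_def targ_def by auto
    show "c m + m \<bullet> (x + s *\<^sub>R v) \<le> M + s * \<mu>" if "m \<in> A" for m
    proof (cases "m \<in> T")
      case True
      then show ?thesis using onT le s(1) by (simp add: mult_left_mono)
    next
      case False
      then show ?thesis using s(2) that by (simp add: less_imp_le)
    qed
  qed
  have "m \<in> targ A c (x + s *\<^sub>R v) \<longleftrightarrow> m \<in> T \<and> m \<bullet> v = \<mu>" for m
  proof (cases "m \<in> T")
    case True
    then have "m \<in> A" unfolding T_def targ_def by simp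
    then show ?thesis using True onT s(1) tv by (simp add: targ_def)
  next
    case False
    then show ?thesis using s(2)[of m] tv by (auto simp: targ_def)
  qed
  then show ?thesis using s(1) unfolding T_def \<mu>_def by blast
qed

definition dual_face :: "(real^'d) set \<Rightarrow> (real^'d \<Rightarrow> real) \<Rightarrow> (real^'d) set \<Rightarrow> (real^'d) set" where
  "dual_face A c S = {x. convex hull S \<subseteq> convex hull (targ A c x)}"

lemma dual_faces_eq: "dual_faces A c = {dual_face A c (targ A c x) | x. 1 \<le> aff_dim (targ A c x)}"
proof (intro set_eqI iffI)
  fix \<tau> assume "\<tau> \<in> dual_faces A c"
  then obtain x where "\<tau> = dual_face A c (targ A c x)" "1 \<le> aff_dim (targ A c x)"
    unfolding dual_faces_def subdiv_cells_def dual_face_def by (auto simp: aff_dim_convex_hull)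
  then show "\<tau> \<in> {dual_face A c (targ A c x) | x. 1 \<le> aff_dim (targ A c x)}" by blast
next
  fix \<tau> assume "\<tau> \<in> {dual_face A c (targ A c x) | x. 1 \<le> aff_dim (targ A c x)}"
  then obtain x where "\<tau> = dual_face A c (targ A c x)" "1 \<le> aff_dim (targ A c x)" by blast
  then show "\<tau> \<in> dual_faces A c"
    unfolding dual_faces_def subdiv_cells_def dual_face_def
    by (intro CollectI exI[of _ "convex hull (targ A c x)"]) (auto simp: aff_dim_convex_hull)
qed

lemma simplex_face_is_cell:
  fixes A S :: "(real^'d) set"
  assumes "finite A" "m0 \<in> S" "S \<subseteq> targ A c x"
    and "independent ((\<lambda>m. m - m0) ` (targ A c x - {m0}))"
  shows "\<exists>x'. targ A c x' = S"
proof -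
  define T where "T = targ A c x"
  obtain g :: "real^'d \<Rightarrow> real" where g: "linear g"
    "\<forall>v\<in>(\<lambda>m. m - m0) ` (T - {m0}). g v = (if v + m0 \<in> S then 0 else -1)"
    using linear_independent_extend[OF assms(4), of "\<lambda>v. if v + m0 \<in> S then 0 else -1"]
    unfolding T_def by blast
  define w where "w = adjoint g 1"
  have w: "m \<bullet> w = m0 \<bullet> w + g (m - m0)" for m
    using adjoint_works[OF g(1), of "m - m0" 1] unfolding w_def by (simp add: inner_diff_left)
  have gT: "g (m - m0) = (if m \<in> S then 0 else -1)" if "m \<in> T" "m \<noteq> m0" for m
    using g(2) that by auto
  have top: "m \<bullet> w = m0 \<bullet> w \<longleftrightarrow> m \<in> S" and le: "m \<bullet> w \<le> m0 \<bullet> w" if "m \<in> T" for m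
  proof -
    have "m \<bullet> w = m0 \<bullet> w + (if m \<in> S then 0 else -1)"
      using w[of m] gT[OF that] assms(2) by (cases "m = m0") auto
    then show "m \<bullet> w = m0 \<bullet> w \<longleftrightarrow> m \<in> S" "m \<bullet> w \<le> m0 \<bullet> w" by auto
  qed
  have "\<exists>s>0. targ A c (x + s *\<^sub>R w) = {m \<in> T. m \<bullet> w = m0 \<bullet> w}"
    using assms(2,3) le unfolding T_def by (intro targ_shift[OF assms(1)]) auto
  moreover have "{m \<in> T. m \<bullet> w = m0 \<bullet> w} = S"
    using assms(3) top unfolding T_def by blast
  ultimately show ?thesis by auto
qed

lemma orthogonal_in_dual_face_span:
  assumes "finite A" "m0 \<in> targ A c x" "\<And>m. m \<in> targ A c x \<Longrightarrow> (m - m0) \<bullet> z = 0"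
  shows "z \<in> span ((\<lambda>y. y - x) ` dual_face A c (targ A c x))"
proof -
  have same: "m \<bullet> z = m0 \<bullet> z" if "m \<in> targ A c x" for m
    using assms(3)[OF that] by (simp add: inner_diff_left)
  have "\<exists>s>0. targ A c (x + s *\<^sub>R z) = {m \<in> targ A c x. m \<bullet> z = m0 \<bullet> z}"
    by (rule targ_shift[OF assms(1,2)]) (simp add: same)
  then obtain s where "s > 0" "targ A c (x + s *\<^sub>R z) = {m \<in> targ A c x. m \<bullet> z = m0 \<bullet> z}"
    by blast
  moreover have "{m \<in> targ A c x. m \<bullet> z = m0 \<bullet> z} = targ A c x"
    using same by blast
  ultimately have "x + s *\<^sub>R z \<in> dual_face A c (targ A c x)"
    unfolding dual_face_def by simp
  then have "(1 / s) *\<^sub>R ((x + s *\<^sub>R z) - x) \<in> span ((\<lambda>y. y - x) ` dual_face A c (targ A c x))"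
    by (intro span_scale span_base imageI)
  then show ?thesis using \<open>s > 0\<close> by simp
qed

lemma dim_orthogonal_complement:
  fixes V :: "'a::euclidean_space set"
  assumes "independent V"
  shows "dim {z. \<forall>v\<in>V. v \<bullet> z = 0} + card V = DIM('a)"
proof -
  have "{z. \<forall>x\<in>span V. orthogonal x z} = {z. \<forall>v\<in>V. v \<bullet> z = 0}"
  proof (intro set_eqI iffI)
    fix z assume "z \<in> {z. \<forall>x\<in>span V. orthogonal x z}"
    then show "z \<in> {z. \<forall>v\<in>V. v \<bullet> z = 0}" by (simp add: span_base orthogonal_def)
  next
    fix z assume "z \<in> {z. \<forall>v\<in>V. v \<bullet> z = 0}"
    then have "orthogonal z y" if "y \<in> V" for y
      using that by (simp add: orthogonal_def inner_commute[of z y])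
    then have "orthogonal z x" if "x \<in> span V" for x
      using orthogonal_to_span[OF that] by blast
    then show "z \<in> {z. \<forall>x\<in>span V. orthogonal x z}" by (simp add: orthogonal_commute)
  qed
  moreover have "dim {z \<in> UNIV. \<forall>x\<in>span V. orthogonal x z} + dim (span V) = dim (UNIV :: 'a set)"
    by (rule dim_subspace_orthogonal_to_vectors) auto
  ultimately show ?thesis using dim_span_eq_card_independent[OF assms] by simp
qed

lemma aff_dim_dual_face_ge:
  fixes A :: "(real^'d) set"
  assumes "finite A" "m0 \<in> targ A c x" "independent ((\<lambda>m. m - m0) ` (targ A c x - {m0}))"
  shows "int CARD('d) - int (card ((\<lambda>m. m - m0) ` (targ A c x - {m0})))
    \<le> aff_dim (dual_face A c (targ A c x))"
proof -
  define V where "V = (\<lambda>m. m - m0) ` (targ A c x - {m0})"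
  define D where "D = dual_face A c (targ A c x)"
  have "{z. \<forall>v\<in>V. v \<bullet> z = 0} \<subseteq> span ((\<lambda>y. y - x) ` D)"
  proof
    fix z assume z: "z \<in> {z. \<forall>v\<in>V. v \<bullet> z = 0}"
    have "(m - m0) \<bullet> z = 0" if "m \<in> targ A c x" for m
      using z that unfolding V_def by (cases "m = m0") auto
    then show "z \<in> span ((\<lambda>y. y - x) ` D)"
      unfolding D_def by (rule orthogonal_in_dual_face_span[OF assms(1,2)])
  qed
  then have "dim {z. \<forall>v\<in>V. v \<bullet> z = 0} \<le> dim ((\<lambda>y. y - x) ` D)"
    by (subst dim_span[symmetric]) (rule dim_subset)
  moreover have "x \<in> D" unfolding D_def dual_face_def by simp
  then have "aff_dim D = int (dim ((\<lambda>y. y - x) ` D))"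
    by (intro aff_dim_eq_dim_subtract hull_inc)
  ultimately show ?thesis
    using dim_orthogonal_complement[OF assms(3)] unfolding V_def D_def by simp
qed

lemma int_span_subset_span: "int_span B \<subseteq> span B"
  unfolding int_span_def by (force intro: span_sum span_scale span_base)

lemma linear_Ints_on_int_span:
  fixes g :: "real^'d \<Rightarrow> real"
  assumes "linear g" "\<And>b. b \<in> B \<Longrightarrow> g b \<in> \<int>" "x \<in> int_span B"
  shows "g x \<in> \<int>"
proof -
  obtain F k where "x = (\<Sum>y\<in>F. of_int (k y) *\<^sub>R y)" "F \<subseteq> B"
    using assms(3) unfolding int_span_def by blast
  then show ?thesis using assms(1,2)
    by (auto simp: linear_sum linear_scale intro!: Ints_sum Ints_mult)
qed

lemma span_lat: "span lat = UNIV"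
proof -
  have "x \<in> span lat" for x :: "real^'d"
  proof -
    have "x = (\<Sum>i\<in>UNIV. x $ i *\<^sub>R axis i 1)"
      using basis_expansion[of x] by (simp add: scalar_mult_eq_scaleR)
    also have "\<dots> \<in> span lat"
      by (intro span_sum span_scale span_base axis_in_lat)
    finally show ?thesis .
  qed
  then show ?thesis by auto
qed

lemma span_lattice_basis:
  assumes "int_span B = lat"
  shows "span B = (UNIV :: (real^'d) set)"
proof -
  have "lat \<subseteq> span B" using int_span_subset_span assms by blast
  then show ?thesis using span_lat by (metis span_minimal subspace_span top.extremum_unique)
qed

lemma lattice_dual_basis:
  fixes B :: "(real^'d) set"
  assumes "independent B" "int_span B = lat"
  obtains d where "\<And>b. b \<in> B \<Longrightarrow> d b \<in> lat"
    and "\<And>b b'. b \<in> B \<Longrightarrow> b' \<in> B \<Longrightarrow> d b \<bullet> b' = (if b' = b then 1 else 0)"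
proof -
  have "\<exists>y\<in>lat. \<forall>b'\<in>B. y \<bullet> b' = (if b' = b then 1 else 0)" if "b \<in> B" for b
  proof -
    obtain g :: "real^'d \<Rightarrow> real" where g: "linear g" "\<forall>b'\<in>B. g b' = (if b' = b then 1 else 0)"
      using linear_independent_extend[OF assms(1), of "\<lambda>b'. if b' = b then 1 else 0"] by blast
    define y where "y = adjoint g 1"
    have yg: "x \<bullet> y = g x" for x
      using adjoint_works[OF g(1), of x 1] unfolding y_def by simp
    have "y $ i \<in> \<int>" for i
    proof -
      have "g (axis i 1) \<in> \<int>"
        by (rule linear_Ints_on_int_span[OF g(1), of B]) (use g(2) assms(2) axis_in_lat in auto)
      then show ?thesis using yg[of "axis i 1"] by (simp add: inner_axis')
    qed
    then have "y \<in> lat" unfolding lat_def by blast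
    moreover have "\<forall>b'\<in>B. y \<bullet> b' = (if b' = b then 1 else 0)"
      using g(2) yg by (simp add: inner_commute)
    ultimately show ?thesis by blast
  qed
  then show ?thesis using that bchoice[of B] by metis
qed

lemma dual_basis_expansion:
  fixes B :: "'a::euclidean_space set"
  assumes "finite B" "span B = UNIV"
    and "\<And>b b'. b \<in> B \<Longrightarrow> b' \<in> B \<Longrightarrow> d b \<bullet> b' = (if b' = b then 1 else 0)"
  shows "m = (\<Sum>b\<in>B. (m \<bullet> b) *\<^sub>R d b)"
proof -
  define e where "e = m - (\<Sum>b\<in>B. (m \<bullet> b) *\<^sub>R d b)"
  have "orthogonal e b'" if "b' \<in> B" for b'
  proof -
    have "(\<Sum>b\<in>B. (m \<bullet> b) *\<^sub>R d b) \<bullet> b' = (\<Sum>b\<in>B. if b = b' then m \<bullet> b' else 0)"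
      unfolding inner_sum_left using assms(3) that by (intro sum.cong) auto
    also have "\<dots> = m \<bullet> b'" using assms(1) that by simp
    finally show ?thesis unfolding e_def orthogonal_def by (simp add: inner_diff_left)
  qed
  then have "orthogonal e e" using orthogonal_to_span[of e B] assms(2) by blast
  then show ?thesis unfolding e_def orthogonal_self by simp
qed

lemma stratum_dual_lat_dual_basis:
  fixes R B :: "(real^'d) set"
  assumes "R \<subseteq> B" "independent B" "int_span B = lat"
  obtains d where "\<And>c. c \<in> B - R \<Longrightarrow> d c \<in> stratum_dual_lat R"
    and "\<And>m. m \<in> stratum_dual_lat R \<Longrightarrow> m = (\<Sum>c\<in>B - R. (m \<bullet> c) *\<^sub>R d c)"
proof -
  obtain d where d: "\<And>b. b \<in> B \<Longrightarrow> d b \<in> lat"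
    and dB: "\<And>b b'. b \<in> B \<Longrightarrow> b' \<in> B \<Longrightarrow> d b \<bullet> b' = (if b' = b then 1 else 0)"
    using lattice_dual_basis[OF assms(2,3)] by blast
  have finB: "finite B" using assms(2) by (rule finiteI_independent)
  show ?thesis
  proof (rule that)
    show "d c \<in> stratum_dual_lat R" if "c \<in> B - R" for c
      using that d[of c] dB[of c] assms(1) unfolding stratum_dual_lat_def by auto
    fix m assume m: "m \<in> stratum_dual_lat R"
    have "m = (\<Sum>b\<in>B. (m \<bullet> b) *\<^sub>R d b)"
      by (rule dual_basis_expansion[OF finB span_lattice_basis[OF assms(3)] dB])
    also have "\<dots> = (\<Sum>c\<in>B - R. (m \<bullet> c) *\<^sub>R d c)"
      using finB m unfolding stratum_dual_lat_def by (intro sum.mono_neutral_right) auto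
    finally show "m = (\<Sum>c\<in>B - R. (m \<bullet> c) *\<^sub>R d c)" .
  qed
qed

lemma integral_dual_family:
  fixes R V :: "(real^'d) set"
  assumes "extends_to_basis lat R" "extends_to_basis (stratum_dual_lat R) V"
  obtains y where "\<And>v. v \<in> V \<Longrightarrow> y v \<in> lat"
    and "\<And>v v'. v \<in> V \<Longrightarrow> v' \<in> V \<Longrightarrow> y v \<bullet> v' = (if v' = v then 1 else 0)"
proof -
  define M where "M = stratum_dual_lat R"
  obtain B where B: "R \<subseteq> B" "B \<subseteq> lat" "independent B" "int_span B = lat"
    using assms(1) unfolding extends_to_basis_def by blast
  obtain B' where B': "V \<subseteq> B'" "B' \<subseteq> M" "independent B'" "int_span B' = M"
    using assms(2) unfolding extends_to_basis_def M_def by blast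
  obtain d where dM: "\<And>c. c \<in> B - R \<Longrightarrow> d c \<in> M"
    and expand: "\<And>m. m \<in> M \<Longrightarrow> m = (\<Sum>c\<in>B - R. (m \<bullet> c) *\<^sub>R d c)"
    using stratum_dual_lat_dual_basis[OF B(1,3,4)] unfolding M_def by blast
  have "\<exists>y\<in>lat. \<forall>v'\<in>V. y \<bullet> v' = (if v' = v then 1 else 0)" if "v \<in> V" for v
  proof -
    obtain g :: "real^'d \<Rightarrow> real" where g: "linear g" "\<forall>b'\<in>B'. g b' = (if b' = v then 1 else 0)"
      using linear_independent_extend[OF B'(3), of "\<lambda>b'. if b' = v then 1 else 0"] by blast
    define y where "y = (\<Sum>c\<in>B - R. g (d c) *\<^sub>R c)"
    have "g (d c) \<in> \<int>" if "c \<in> B - R" for c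
      by (rule linear_Ints_on_int_span[OF g(1), of B']) (use g(2) B'(4) dM[OF that] in auto)
    then have "y \<in> lat"
      unfolding y_def using B(2) by (intro lat_sum lat_scaleR) auto
    moreover have "y \<bullet> v' = g v'" if "v' \<in> V" for v'
    proof -
      have "v' \<in> M" using that B'(1,2) by blast
      have "g v' = (\<Sum>c\<in>B - R. (v' \<bullet> c) * g (d c))"
        by (subst expand[OF \<open>v' \<in> M\<close>]) (simp add: linear_sum[OF g(1)] linear_scale[OF g(1)])
      also have "\<dots> = y \<bullet> v'"
        unfolding y_def inner_sum_left by (simp add: inner_commute mult.commute)
      finally show ?thesis by simp
    qed
    ultimately show ?thesis using g(2) B'(1) \<open>v \<in> V\<close> by force
  qed
  then show ?thesis using that bchoice[of V] by metis
qed

lemma lat_remove_dual_components: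
  fixes V :: "(real^'d) set"
  assumes "finite V" "V \<subseteq> lat" "z \<in> lat" "v \<in> V"
    and y_lat: "\<And>v. v \<in> V \<Longrightarrow> y v \<in> lat"
    and y_dual: "\<And>v v'. v \<in> V \<Longrightarrow> v' \<in> V \<Longrightarrow> y v \<bullet> v' = (if v' = v then 1 else 0)"
  shows "z - (\<Sum>v'\<in>V. (z \<bullet> v') *\<^sub>R y v') \<in> {x \<in> lat. x \<bullet> v = 0}"
proof -
  have "z - (\<Sum>v'\<in>V. (z \<bullet> v') *\<^sub>R y v') \<in> lat"
    using assms(2,3) y_lat by (intro lat_diff lat_sum lat_scaleR lat_inner) auto
  moreover have "(\<Sum>v'\<in>V. (z \<bullet> v') *\<^sub>R y v') \<bullet> v = (\<Sum>v'\<in>V. if v' = v then z \<bullet> v else 0)"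
    unfolding inner_sum_left using y_dual assms(4) by (intro sum.cong) auto
  ultimately show ?thesis using assms(1,4) by (simp add: inner_diff_left)
qed

lemma wedge_in_zspan_fun_multilinear:
  fixes w :: "nat \<Rightarrow> 'l \<Rightarrow> real^'d"
  assumes "finite I" "\<And>j. j < p \<Longrightarrow> vs j = (\<Sum>l\<in>I. a j l *\<^sub>R w j l)"
    and "\<And>j l. j < p \<Longrightarrow> l \<in> I \<Longrightarrow> a j l \<in> \<int>"
    and "\<And>f. f \<in> PiE {..<p} (\<lambda>_. I) \<Longrightarrow> wedge p (\<lambda>j. w j (f j)) \<in> zspan_fun S"
  shows "wedge p vs \<in> zspan_fun S"
proof -
  have "(\<Prod>j<p. a j (f j)) \<in> \<int>" if "f \<in> PiE {..<p} (\<lambda>_. I)" for f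
    using that assms(3) by (intro Ints_prod) (auto simp: PiE_iff)
  then have "(\<lambda>is. \<Sum>f\<in>PiE {..<p} (\<lambda>_. I). (\<Prod>j<p. a j (f j)) * wedge p (\<lambda>j. w j (f j)) is)
      \<in> zspan_fun S"
    using assms(1,4) by (intro zspan_fun_sum finite_PiE) auto
  then show ?thesis using wedge_multilinear[OF assms(1,2)] by simp
qed

lemma ext_power_lat_subset_hyperplanes:
  fixes V :: "(real^'d) set"
  assumes "finite V" "V \<subseteq> lat" "p < card V"
    and y_lat: "\<And>v. v \<in> V \<Longrightarrow> y v \<in> lat"
    and y_dual: "\<And>v v'. v \<in> V \<Longrightarrow> v' \<in> V \<Longrightarrow> y v \<bullet> v' = (if v' = v then 1 else 0)"
  shows "ext_power p lat \<subseteq> zspan_fun (\<Union>v\<in>V. ext_power p {z \<in> lat. z \<bullet> v = 0})"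
    (is "_ \<subseteq> zspan_fun ?H")
proof -
  define I where "I = insert None (Some ` V)"
  have "wedge p vs \<in> zspan_fun ?H" if vs: "\<And>j. j < p \<Longrightarrow> vs j \<in> lat" for vs
  proof (rule wedge_in_zspan_fun_multilinear)
    define a where "a j l = (case l of None \<Rightarrow> 1 | Some v \<Rightarrow> vs j \<bullet> v)" for j l
    define w where "w j l = (case l of
      None \<Rightarrow> vs j - (\<Sum>v\<in>V. (vs j \<bullet> v) *\<^sub>R y v) | Some v \<Rightarrow> y v)" for j l
    show "finite I" unfolding I_def using assms(1) by simp
    show "vs j = (\<Sum>l\<in>I. a j l *\<^sub>R w j l)" for j
      unfolding I_def a_def w_def using assms(1) by (simp add: sum.reindex)
    show "a j l \<in> \<int>" if "j < p" "l \<in> I" for j l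
      using that vs assms(2) unfolding a_def I_def by (auto intro!: lat_inner)
    show "wedge p (\<lambda>j. w j (f j)) \<in> zspan_fun ?H" if f: "f \<in> PiE {..<p} (\<lambda>_. I)" for f
    proof -
      \<comment> \<open>a term of the expansion involves at most \<open>p < card V\<close> of the vectors \<open>y v\<close>\<close>
      have "card (f ` {..<p}) < card (Some ` V)"
        using card_image_le[of "{..<p}" f] assms(3) by (simp add: card_image)
      then obtain v where v: "v \<in> V" "Some v \<notin> f ` {..<p}"
        by (metis card_mono finite_imageI finite_lessThan image_subset_iff leD)
      have "w j (f j) \<in> {z \<in> lat. z \<bullet> v = 0}" if "j < p" for j
      proof (cases "f j")
        case None
        then show ?thesis
          using lat_remove_dual_components[OF assms(1,2) vs[OF that] v(1) y_lat y_dual]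
          unfolding w_def by simp
      next
        case (Some v')
        have "f j \<in> I" "f j \<in> f ` {..<p}" using f that by auto
        then have "v' \<in> V" "v' \<noteq> v" using Some v(2) unfolding I_def by auto
        then show ?thesis using Some y_lat y_dual v(1) unfolding w_def by auto
      qed
      then have "wedge p (\<lambda>j. w j (f j)) \<in> ?H"
        using v(1) by (blast intro: wedge_in_ext_power)
      then show ?thesis by (rule zspan_fun_base)
    qed
  qed
  then show ?thesis
    unfolding ext_power_def by (intro zspan_fun_minimal) blast
qed

lemma edge_dual_face:
  fixes A :: "(real^'d) set"
  assumes "finite A" "m0 \<in> targ A c x" "m \<in> targ A c x" "m \<noteq> m0"
    and "independent ((\<lambda>m. m - m0) ` (targ A c x - {m0}))"
  shows "dual_face A c {m0, m} \<in> dual_faces A c"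
    and "dual_face A c (targ A c x) \<subseteq> dual_face A c {m0, m}"
    and "{z \<in> lat. z \<bullet> (m - m0) = 0} \<subseteq> tangent_lat (dual_face A c {m0, m})"
proof -
  obtain x' where x': "targ A c x' = {m0, m}"
    using simplex_face_is_cell[OF assms(1), of m0 "{m0, m}"] assms(2,3,5) by blast
  then show "dual_face A c {m0, m} \<in> dual_faces A c"
    unfolding dual_faces_eq using assms(4) by (metis (mono_tags, lifting) aff_dim_2 mem_Collect_eq order_refl)
  have "convex hull {m0, m} \<subseteq> convex hull (targ A c x)"
    using assms(2,3) by (intro hull_mono) auto
  then show "dual_face A c (targ A c x) \<subseteq> dual_face A c {m0, m}"
    unfolding dual_face_def by auto
  show "{z \<in> lat. z \<bullet> (m - m0) = 0} \<subseteq> tangent_lat (dual_face A c {m0, m})"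
  proof
    fix z assume z: "z \<in> {z \<in> lat. z \<bullet> (m - m0) = 0}"
    define \<sigma> where "\<sigma> = dual_face A c {m0, m}"
    have "z \<in> span ((\<lambda>y. y - x') ` \<sigma>)"
      unfolding \<sigma>_def x'[symmetric]
      by (rule orthogonal_in_dual_face_span[OF assms(1)]) (use x' z in \<open>auto simp: inner_commute\<close>)
    moreover have "x' \<in> \<sigma>" unfolding \<sigma>_def dual_face_def using x' by simp
    then have "span ((\<lambda>y. y - x') ` \<sigma>) \<subseteq> span {a - b | a b. a \<in> \<sigma> \<and> b \<in> \<sigma>}"
      by (intro span_mono) blast
    ultimately show "z \<in> tangent_lat \<sigma>" using z unfolding tangent_lat_def by blast
  qed
qed

lemma primitive_dual_face_edges:
  fixes A :: "(real^'d) set"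
  assumes "finite A" "primitive_triangulation L A c" "\<tau> \<in> dual_faces A c"
  obtains V where "extends_to_basis L V" "int CARD('d) - int (card V) \<le> aff_dim \<tau>"
    and "\<And>v. v \<in> V \<Longrightarrow> \<exists>\<sigma>\<in>dual_faces A c. \<tau> \<subseteq> \<sigma> \<and> {z \<in> lat. z \<bullet> v = 0} \<subseteq> tangent_lat \<sigma>"
proof -
  obtain x where \<tau>: "\<tau> = dual_face A c (targ A c x)"
    using assms(3) unfolding dual_faces_eq by blast
  obtain m0 where m0: "m0 \<in> targ A c x"
    and basis: "extends_to_basis L ((\<lambda>m. m - m0) ` (targ A c x - {m0}))"
    using assms(2) unfolding primitive_triangulation_def by blast
  then have indep: "independent ((\<lambda>m. m - m0) ` (targ A c x - {m0}))"
    unfolding extends_to_basis_def using independent_mono by blast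
  show ?thesis
  proof (rule that[OF basis])
    show "int CARD('d) - int (card ((\<lambda>m. m - m0) ` (targ A c x - {m0}))) \<le> aff_dim \<tau>"
      unfolding \<tau> by (rule aff_dim_dual_face_ge[OF assms(1) m0 indep])
    fix v assume "v \<in> (\<lambda>m. m - m0) ` (targ A c x - {m0})"
    then obtain m where "m \<in> targ A c x" "m \<noteq> m0" "v = m - m0" by blast
    then show "\<exists>\<sigma>\<in>dual_faces A c. \<tau> \<subseteq> \<sigma> \<and> {z \<in> lat. z \<bullet> v = 0} \<subseteq> tangent_lat \<sigma>"
      using edge_dual_face[OF assms(1) m0 _ _ indep] unfolding \<tau> by blast
  qed
qed

lemma stratum_face_edges:
  fixes A :: "(real^'d) set"
  assumes "nonsingular_hypersurface \<Sigma> A c" "R \<in> \<Sigma>" "\<tau> \<in> faces_in A c R"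
  obtains V where "extends_to_basis (stratum_dual_lat R) V" "int CARD('d) - int (card V) \<le> aff_dim \<tau>"
    and "\<And>v. v \<in> V \<Longrightarrow> \<exists>\<sigma>\<in>faces_in A c R. \<tau> \<subseteq> \<sigma> \<and> {z \<in> lat. z \<bullet> v = 0} \<subseteq> tangent_lat \<sigma>"
proof -
  obtain A' c' where A': "finite A'" and DF: "dual_faces A' c' = faces_in A c R"
    and PT: "primitive_triangulation (stratum_dual_lat R) A' c'"
    using assms(1,2) unfolding nonsingular_hypersurface_def by blast
  show ?thesis
    using primitive_dual_face_edges[OF A'(1) PT, of \<tau>] assms(3) that unfolding DF by blast
qed

lemma extends_to_basis_subset:
  "extends_to_basis L V \<Longrightarrow> finite V \<and> V \<subseteq> L"
  unfolding extends_to_basis_def by (auto dest: finiteI_independent intro: finite_subset)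

lemma ext_power_subset_N_sub:
  assumes "\<sigma> \<in> faces_in A c R" "\<tau> \<subseteq> \<sigma>" "L \<subseteq> tangent_lat \<sigma>"
  shows "ext_power p L \<subseteq> N_sub A c p R \<tau>"
proof -
  have "ext_power p L \<subseteq> (\<Union>\<sigma>\<in>{\<sigma> \<in> faces_in A c R. \<tau> \<subseteq> \<sigma>}. ext_power p (tangent_lat \<sigma>))"
    using assms ext_power_mono[OF assms(3)] by blast
  then show ?thesis unfolding N_sub_def by (blast intro: zspan_fun_base)
qed

lemma zspan_fun_minimal_N_sub: "S \<subseteq> N_sub A c p R \<tau> \<Longrightarrow> zspan_fun S \<subseteq> N_sub A c p R \<tau>"
  unfolding N_sub_def by (rule zspan_fun_minimal)

lemma N_cosheaf_eq_singleton:
  "ext_power p lat \<subseteq> N_sub A c p R \<tau> \<Longrightarrow> N_cosheaf A c p R \<tau> = {N_sub A c p R \<tau>}"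
  unfolding N_cosheaf_def N_sub_def using zero_in_ext_power by (intro translates_of_zspan_fun) auto

theorem lemma3p7:
  fixes \<Sigma> :: "(real^'d) set set" and A :: "(real^'d) set" and c :: "real^'d \<Rightarrow> real"
    and R \<tau> :: "(real^'d) set" and p :: nat
  assumes "nonsingular_fan \<Sigma>"
    and "finite A" and "A \<subseteq> lat" and "2 \<le> card A"
    and "nonsingular_hypersurface \<Sigma> A c"
    and "R \<in> \<Sigma>" and "\<tau> \<in> faces_in A c R"
    and "int p \<le> (int CARD('d) - 1) - face_dim R \<tau> - int (card R)"
  shows "N_cosheaf A c p R \<tau> = {N_sub A c p R \<tau>}"
proof -
  obtain V where V: "extends_to_basis (stratum_dual_lat R) V"
      "int CARD('d) - int (card V) \<le> aff_dim \<tau>"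
    and edges: "\<And>v. v \<in> V \<Longrightarrow>
      \<exists>\<sigma>\<in>faces_in A c R. \<tau> \<subseteq> \<sigma> \<and> {z \<in> lat. z \<bullet> v = 0} \<subseteq> tangent_lat \<sigma>"
    using stratum_face_edges[OF assms(5,6,7)] by blast
  have "finite V" "V \<subseteq> lat"
    using extends_to_basis_subset[OF V(1)] unfolding stratum_dual_lat_def by auto
  moreover have "p < card V"
    using V(2) assms(8) unfolding face_dim_def by linarith
  moreover have "extends_to_basis lat R"
    using assms(1,6) by (simp add: nonsingular_fan_def)
  then obtain y where "\<And>v. v \<in> V \<Longrightarrow> y v \<in> lat"
    "\<And>v v'. v \<in> V \<Longrightarrow> v' \<in> V \<Longrightarrow> y v \<bullet> v' = (if v' = v then 1 else 0)"
    using integral_dual_family[OF _ V(1)] by blast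
  ultimately have "ext_power p lat \<subseteq> zspan_fun (\<Union>v\<in>V. ext_power p {z \<in> lat. z \<bullet> v = 0})"
    by (rule ext_power_lat_subset_hyperplanes)
  also have "\<dots> \<subseteq> N_sub A c p R \<tau>"
  proof (intro zspan_fun_minimal_N_sub UN_least)
    fix v assume "v \<in> V"
    then obtain \<sigma> where "\<sigma> \<in> faces_in A c R" "\<tau> \<subseteq> \<sigma>" "{z \<in> lat. z \<bullet> v = 0} \<subseteq> tangent_lat \<sigma>"
      using edges by blast
    then show "ext_power p {z \<in> lat. z \<bullet> v = 0} \<subseteq> N_sub A c p R \<tau>"
      by (rule ext_power_subset_N_sub)
  qed
  finally show ?thesis by (rule N_cosheaf_eq_singleton)
qed

end
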